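(* Let $R$ be a domain such that $\mathcal I(R)$ is a BF-monoid. Suppose there exist distinct $X_1,X_2\in R\setminus\{0\}$ such that $\mathfrak a_1(X_1,X_2)$, $\mathfrak b_2(X_1,X_2)$, and $\mathfrak c_{2i+1}(X_1,X_2)$ for all $i\in\mathbb N$ are atoms of $\mathcal I(R)$. Then: \begin{enumerate} \item $\mathcal I(R)$ is not a transfer Krull monoid; \item $\mathcal I(R)$ is not locally finitely generated; \item $\mathcal U_k(\mathcal I(R))=\mathbb N_{\ge2}$ for all $k\ge2$. \end{enumerate}
   Context: $\mathcal I(R)$: semigroup of nonzero ideals of $R$ under multiplication. Ideals: $\mathfrak a_1(X_1,X_2)=\langle X_1,X_2\rangle$; $\mathfrak b_2(X_1,X_2)=\langle X_1^2,X_2^2\rangle$; $\mathfrak c_{2i+1}(X_1,X_2)$ is the ideal generated by the monomials $X_1^{2i+1-t}X_2^t$ with $t\in\{0,1,3,5,\dots,2i+1\}$. Monoids are commutative, unit-cancellative, with identity; atoms, $\mathsf L(a)$ (lengths of factorizations into atoms up to units), $\mathcal L(H)$, BF-monoid (all $\mathsf L(a)$ finite nonempty), $\mathcal U_k(H)$ (union of all $L\in\mathcal L(H)$ containing $k$). Locally finitely generated: for every $a$, the submonoid of all divisors of powers of $a$, modulo units, is finitely generated. Transfer homomorphism $\theta:H\to B$: (T1) $B=\theta(H)B^\times$, $\theta^{-1}(B^\times)=H^\times$; (T2) $\theta(u)=bc$ implies $u=vw$ with $\theta(v)\in bB^\times$, $\theta(w)\in cB^\times$. Krull monoid: cancellative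 monoid with a divisor homomorphism into a factorial monoid. Transfer Krull: has a transfer homomorphism to a Krull monoid. *)

theory Defs
  imports "HOL-Algebra.Ideal_Product" "HOL-Algebra.Divisibility" "HOL-Library.Multiset"
begin

definition ideal_monoid :: "('a, 'b) ring_scheme \<Rightarrow> 'a set monoid" where
  "ideal_monoid R = \<lparr> carrier = {I. ideal I R \<and> I \<noteq> {\<zero>\<^bsub>R\<^esub>}},
                      monoid.mult = ideal_prod R,
                      one = carrier R \<rparr>"

definition ideal_a1 :: "('a, 'b) ring_scheme \<Rightarrow> 'a \<Rightarrow> 'a \<Rightarrow> 'a set" where
  "ideal_a1 R x1 x2 = Idl\<^bsub>R\<^esub> {x1, x2}"

definition ideal_b2 :: "('a, 'b) ring_scheme \<Rightarrow> 'a \<Rightarrow> 'a \<Rightarrow> 'a set" where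
  "ideal_b2 R x1 x2 = Idl\<^bsub>R\<^esub> {x1 [^]\<^bsub>R\<^esub> (2::nat), x2 [^]\<^bsub>R\<^esub> (2::nat)}"

definition ideal_c :: "('a, 'b) ring_scheme \<Rightarrow> nat \<Rightarrow> 'a \<Rightarrow> 'a \<Rightarrow> 'a set" where
  "ideal_c R i x1 x2 = Idl\<^bsub>R\<^esub>
     {x1 [^]\<^bsub>R\<^esub> (2*i+1-t) \<otimes>\<^bsub>R\<^esub> x2 [^]\<^bsub>R\<^esub> t | t. t = 0 \<or> (odd t \<and> t \<le> 2*i+1)}"

definition lprod :: "('a, 'c) monoid_scheme \<Rightarrow> 'a list \<Rightarrow> 'a" where
  "lprod H xs = foldr (\<lambda>x y. x \<otimes>\<^bsub>H\<^esub> y) xs \<one>\<^bsub>H\<^esub>"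

definition unit_cancellative :: "('a, 'c) monoid_scheme \<Rightarrow> bool" where
  "unit_cancellative H \<longleftrightarrow> (\<forall>a\<in>carrier H. \<forall>u\<in>carrier H.
      (a \<otimes>\<^bsub>H\<^esub> u = a \<or> u \<otimes>\<^bsub>H\<^esub> a = a) \<longrightarrow> u \<in> Units H)"

definition atom :: "('a, 'c) monoid_scheme \<Rightarrow> 'a \<Rightarrow> bool" where
  "atom H a \<longleftrightarrow> a \<in> carrier H \<and> a \<notin> Units H \<and>
     (\<forall>b\<in>carrier H. \<forall>c\<in>carrier H. a = b \<otimes>\<^bsub>H\<^esub> c \<longrightarrow> b \<in> Units H \<or> c \<in> Units H)"

definition lengths :: "('a, 'c) monoid_scheme \<Rightarrow> 'a \<Rightarrow> nat set" where
  "lengths H a = {length xs | xs. (\<forall>x\<in>set xs. atom H x) \<and>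
      (\<exists>u\<in>Units H. a = u \<otimes>\<^bsub>H\<^esub> lprod H xs)}"

definition system_of_lengths :: "('a, 'c) monoid_scheme \<Rightarrow> nat set set" where
  "system_of_lengths H = {lengths H a | a. a \<in> carrier H}"

definition union_of_sets_of_lengths :: "('a, 'c) monoid_scheme \<Rightarrow> nat \<Rightarrow> nat set" where
  "union_of_sets_of_lengths H k = \<Union>{L \<in> system_of_lengths H. k \<in> L}"

text \<open>Monoids are commutative and unit-cancellative by convention.\<close>
definition BF_monoid :: "('a, 'c) monoid_scheme \<Rightarrow> bool" where
  "BF_monoid H \<longleftrightarrow> comm_monoid H \<and> unit_cancellative H \<and>
     (\<forall>a\<in>carrier H. finite (lengths H a) \<and> lengths H a \<noteq> {})"

definition divisors_of_powers :: "('a, 'c) monoid_scheme \<Rightarrow> 'a \<Rightarrow> 'a set" where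
  "divisors_of_powers H a = {b \<in> carrier H. \<exists>n::nat. b divides\<^bsub>H\<^esub> (a [^]\<^bsub>H\<^esub> n)}"

definition locally_finitely_generated :: "('a, 'c) monoid_scheme \<Rightarrow> bool" where
  "locally_finitely_generated H \<longleftrightarrow> (\<forall>a\<in>carrier H. \<exists>E. finite E \<and>
      E \<subseteq> divisors_of_powers H a \<and>
      (\<forall>b\<in>divisors_of_powers H a. \<exists>u\<in>Units H. \<exists>xs. set xs \<subseteq> E \<and>
          b = u \<otimes>\<^bsub>H\<^esub> lprod H xs))"

definition monoid_hom :: "('a, 'c) monoid_scheme \<Rightarrow> ('b, 'd) monoid_scheme \<Rightarrow> ('a \<Rightarrow> 'b) \<Rightarrow> bool" where
  "monoid_hom H B f \<longleftrightarrow> (\<forall>x\<in>carrier H. f x \<in> carrier B) \<and> f \<one>\<^bsub>H\<^esub> = \<one>\<^bsub>B\<^esub> \<and>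
      (\<forall>x\<in>carrier H. \<forall>y\<in>carrier H. f (x \<otimes>\<^bsub>H\<^esub> y) = f x \<otimes>\<^bsub>B\<^esub> f y)"

definition transfer_hom :: "('a, 'c) monoid_scheme \<Rightarrow> ('b, 'd) monoid_scheme \<Rightarrow> ('a \<Rightarrow> 'b) \<Rightarrow> bool" where
  "transfer_hom H B \<theta> \<longleftrightarrow> monoid_hom H B \<theta> \<and>
     (\<forall>b\<in>carrier B. \<exists>h\<in>carrier H. \<exists>v\<in>Units B. b = \<theta> h \<otimes>\<^bsub>B\<^esub> v) \<and>
     {h \<in> carrier H. \<theta> h \<in> Units B} = Units H \<and>
     (\<forall>u\<in>carrier H. \<forall>b\<in>carrier B. \<forall>c\<in>carrier B. \<theta> u = b \<otimes>\<^bsub>B\<^esub> c \<longrightarrow>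
        (\<exists>v\<in>carrier H. \<exists>w\<in>carrier H. u = v \<otimes>\<^bsub>H\<^esub> w \<and>
           (\<exists>e\<in>Units B. \<theta> v = b \<otimes>\<^bsub>B\<^esub> e) \<and> (\<exists>e\<in>Units B. \<theta> w = c \<otimes>\<^bsub>B\<^esub> e)))"

definition divisor_hom :: "('a, 'c) monoid_scheme \<Rightarrow> ('b, 'd) monoid_scheme \<Rightarrow> ('a \<Rightarrow> 'b) \<Rightarrow> bool" where
  "divisor_hom H D f \<longleftrightarrow> monoid_hom H D f \<and>
     (\<forall>a\<in>carrier H. \<forall>b\<in>carrier H. f a divides\<^bsub>D\<^esub> f b \<longrightarrow> a divides\<^bsub>H\<^esub> b)"

text \<open>Krull monoid: (commutative) cancellative monoid with a divisor homomorphism into a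
  factorial monoid.  The factorial monoid is taken with carrier type ('b set) multiset,
  which is large enough.\<close>
definition Krull_monoid :: "('b, 'd) monoid_scheme \<Rightarrow> bool" where
  "Krull_monoid B \<longleftrightarrow> comm_monoid_cancel B \<and>
     (\<exists>(F :: ('b set) multiset monoid) \<phi>. factorial_monoid F \<and> divisor_hom B F \<phi>)"

definition transfer_Krull :: "('a, 'c) monoid_scheme \<Rightarrow> ('b, 'd) monoid_scheme itself \<Rightarrow> bool" where
  "transfer_Krull H _ \<longleftrightarrow> (\<exists>(B :: ('b, 'd) monoid_scheme) \<theta>. Krull_monoid B \<and> transfer_hom H B \<theta>)"

end

theory Submission
  imports Defs "HOL-Library.Set_Algebras" "HOL-Library.Product_Plus"
begin

(* Write a = a_1, b = b_2 and c_i = c_(2i+1). Multiplying monomial ideals adds exponent sets, which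
   gives the relations a b = a^3 and a c_i = a^(2i+2); everything else is monoid theory.
   A transfer homomorphism theta into a cancellative monoid would force theta b = (theta a)^2;
   splitting b accordingly exhibits a unit mapping to an associate of theta a, so a is a unit.
   The c_i divide powers of a, and by unit-cancellativity no two of them are associated, so no
   finite set generates the divisors of powers of a up to units. Finally, for even N and
   2 <= m <= N, a^N is a^(m-1) c_i or a^(m-2) b c_i for a suitable i, a factorization of length m,
   while an element with a factorization of length at least 2 is neither a unit nor an atom. *)

section \<open>Products of monomial ideals\<close>

lemma (in cring) ideal_colon:
  assumes K: "ideal K R" and J: "J \<subseteq> carrier R"
  shows "ideal {x \<in> carrier R. \<forall>j\<in>J. x \<otimes> j \<in> K} R"
proof -
  interpret ideal K R by fact
  show ?thesis
  proof (intro idealI subgroup.intro)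
    show "ring R" by (rule ring_axioms)
  next
    fix a x assume a: "a \<in> {x \<in> carrier R. \<forall>j\<in>J. x \<otimes> j \<in> K}" and x: "x \<in> carrier R"
    then show "x \<otimes> a \<in> {x \<in> carrier R. \<forall>j\<in>J. x \<otimes> j \<in> K}"
      using J by (auto simp: m_assoc subsetD I_l_closed)
    then show "a \<otimes> x \<in> {x \<in> carrier R. \<forall>j\<in>J. x \<otimes> j \<in> K}"
      using a x by (simp add: m_comm)
  qed (use J in \<open>auto simp: l_distr l_minus subsetD simp flip: a_inv_def\<close>)
qed

lemma (in cring) genideal_mult_mem:
  assumes S: "S \<subseteq> carrier R" and T: "T \<subseteq> carrier R" and "s \<in> Idl S" "t \<in> Idl T"
  shows "s \<otimes> t \<in> Idl (S <#> T)"
proof -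
  have ST: "S <#> T \<subseteq> carrier R"
    using S T by (auto simp: set_mult_def)
  let ?K = "Idl (S <#> T)"
  have K: "ideal ?K R"
    by (rule genideal_ideal[OF ST])
  have IdlT: "Idl T \<subseteq> carrier R"
    by (rule additive_subgroup.a_subset[OF ideal.axioms(1)[OF genideal_ideal[OF T]]])
  \<comment> \<open>Pass from generators to generated ideals one factor at a time, via ideal quotients.\<close>
  have "t \<otimes> s \<in> ?K" if "s \<in> S" "t \<in> T" for s t
  proof -
    have "s \<otimes> t \<in> ?K"
      using genideal_self[OF ST] that by (auto simp: set_mult_def)
    then show ?thesis
      using that S T by (simp add: m_comm subsetD)
  qed
  then have "T \<subseteq> {x \<in> carrier R. \<forall>s\<in>S. x \<otimes> s \<in> ?K}"
    using T by blast
  then have IT: "Idl T \<subseteq> {x \<in> carrier R. \<forall>s\<in>S. x \<otimes> s \<in> ?K}"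
    by (rule genideal_minimal[OF ideal_colon[OF K S]])
  have "s \<otimes> t \<in> ?K" if "s \<in> S" "t \<in> Idl T" for s t
  proof -
    have "t \<otimes> s \<in> ?K"
      using IT that by blast
    then show ?thesis
      using that S IdlT by (simp add: m_comm subsetD)
  qed
  then have "S \<subseteq> {x \<in> carrier R. \<forall>t\<in>Idl T. x \<otimes> t \<in> ?K}"
    using S by blast
  then have "Idl S \<subseteq> {x \<in> carrier R. \<forall>t\<in>Idl T. x \<otimes> t \<in> ?K}"
    by (rule genideal_minimal[OF ideal_colon[OF K IdlT]])
  then show ?thesis
    using assms(3,4) by blast
qed

lemma (in cring) ideal_prod_genideals:
  assumes S: "S \<subseteq> carrier R" and T: "T \<subseteq> carrier R"
  shows "ideal_prod R (Idl S) (Idl T) = Idl (S <#> T)"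
proof
  show "ideal_prod R (Idl S) (Idl T) \<subseteq> Idl (S <#> T)"
  proof
    fix x assume "x \<in> ideal_prod R (Idl S) (Idl T)"
    then show "x \<in> Idl (S <#> T)"
    proof (induct x rule: ideal_prod.induct)
      case (prod i j)
      then show ?case
        by (rule genideal_mult_mem[OF S T])
    next
      case (sum s1 s2)
      then show ?case
        using genideal_ideal[of "S <#> T"] S T
        by (simp add: additive_subgroup.a_closed ideal.axioms(1) set_mult_closed)
    qed
  qed
next
  have "S <#> T \<subseteq> ideal_prod R (Idl S) (Idl T)"
    using genideal_self[OF S] genideal_self[OF T]
    by (auto simp: set_mult_def intro!: ideal_prod.prod)
  then show "Idl (S <#> T) \<subseteq> ideal_prod R (Idl S) (Idl T)"
    by (rule genideal_minimal[OF ideal_prod_is_ideal[OF genideal_ideal[OF S] genideal_ideal[OF T]]])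
qed

definition monomial :: "('a, 'b) ring_scheme \<Rightarrow> 'a \<Rightarrow> 'a \<Rightarrow> nat \<times> nat \<Rightarrow> 'a" where
  "monomial R x y d = x [^]\<^bsub>R\<^esub> fst d \<otimes>\<^bsub>R\<^esub> y [^]\<^bsub>R\<^esub> snd d"

definition monomial_ideal :: "('a, 'b) ring_scheme \<Rightarrow> 'a \<Rightarrow> 'a \<Rightarrow> (nat \<times> nat) set \<Rightarrow> 'a set" where
  "monomial_ideal R x y D = Idl\<^bsub>R\<^esub> (monomial R x y ` D)"

definition homogeneous_exponents :: "nat \<Rightarrow> (nat \<times> nat) set" where
  "homogeneous_exponents n = {d. fst d + snd d = n}"

definition ideal_c_exponents :: "nat \<Rightarrow> (nat \<times> nat) set" where
  "ideal_c_exponents i = {d. fst d + snd d = 2 * i + 1 \<and> (snd d = 0 \<or> odd (snd d))}"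

lemma homogeneous_exponents_0: "homogeneous_exponents 0 = {(0, 0)}"
  by (auto simp: homogeneous_exponents_def)

lemma homogeneous_exponents_add:
  "homogeneous_exponents m + homogeneous_exponents n = homogeneous_exponents (m + n)"
proof
  show "homogeneous_exponents m + homogeneous_exponents n \<subseteq> homogeneous_exponents (m + n)"
    by (auto simp: homogeneous_exponents_def elim!: set_plus_elim)
  show "homogeneous_exponents (m + n) \<subseteq> homogeneous_exponents m + homogeneous_exponents n"
  proof
    fix d :: "nat \<times> nat"
    assume "d \<in> homogeneous_exponents (m + n)"
    then obtain p q where d: "d = (p, q)" "p + q = m + n"
      by (cases d) (auto simp: homogeneous_exponents_def)
    show "d \<in> homogeneous_exponents m + homogeneous_exponents n"
    proof (cases "m \<le> p")
      case True
      have "d = (m, 0) + (p - m, q)"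
        using True d by (simp add: plus_prod_def)
      also have "\<dots> \<in> homogeneous_exponents m + homogeneous_exponents n"
        using True d by (intro set_plus_intro) (auto simp: homogeneous_exponents_def)
      finally show ?thesis .
    next
      case False
      have "d = (p, m - p) + (0, q - (m - p))"
        using False d by (simp add: plus_prod_def)
      also have "\<dots> \<in> homogeneous_exponents m + homogeneous_exponents n"
        using False d by (intro set_plus_intro) (auto simp: homogeneous_exponents_def)
      finally show ?thesis .
    qed
  qed
qed

lemma homogeneous_exponents_1: "homogeneous_exponents 1 = {(1, 0), (0, 1)}"
  by (auto simp: homogeneous_exponents_def add_is_1)

lemma homogeneous_exponents_3: "homogeneous_exponents 3 = {(3, 0), (2, 1), (1, 2), (0, 3)}"
proof
  show "homogeneous_exponents 3 \<subseteq> {(3, 0), (2, 1), (1, 2), (0, 3)}"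
  proof
    fix d :: "nat \<times> nat"
    assume "d \<in> homogeneous_exponents 3"
    then obtain p q where d: "d = (p, q)" "p + q = 3"
      by (cases d) (auto simp: homogeneous_exponents_def)
    then have "q = 0 \<and> p = 3 \<or> q = 1 \<and> p = 2 \<or> q = 2 \<and> p = 1 \<or> q = 3 \<and> p = 0"
      by linarith
    then show "d \<in> {(3, 0), (2, 1), (1, 2), (0, 3)}"
      using d by auto
  qed
qed (auto simp: homogeneous_exponents_def)

lemma homogeneous_exponents_1_plus_squares:
  "homogeneous_exponents 1 + {(2, 0), (0, 2)} = homogeneous_exponents 3"
  unfolding homogeneous_exponents_1 homogeneous_exponents_3
  by (auto simp: set_plus_def plus_prod_def numeral_eq_Suc)

lemma homogeneous_exponents_1_plus_ideal_c_exponents: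
  "homogeneous_exponents 1 + ideal_c_exponents i = homogeneous_exponents (2 * i + 2)"
proof
  show "homogeneous_exponents 1 + ideal_c_exponents i \<subseteq> homogeneous_exponents (2 * i + 2)"
    by (auto simp: homogeneous_exponents_def ideal_c_exponents_def elim!: set_plus_elim)
  show "homogeneous_exponents (2 * i + 2) \<subseteq> homogeneous_exponents 1 + ideal_c_exponents i"
  proof
    fix d :: "nat \<times> nat"
    assume "d \<in> homogeneous_exponents (2 * i + 2)"
    then obtain p q where d: "d = (p, q)" "p + q = 2 * i + 2"
      by (cases d) (auto simp: homogeneous_exponents_def)
    show "d \<in> homogeneous_exponents 1 + ideal_c_exponents i"
    proof (cases "q = 0 \<or> odd q")
      case True
      then have "1 \<le> p"
        using d(2) by presburger
      then have "d = (1, 0) + (p - 1, q)"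
        using d by (simp add: plus_prod_def)
      also have "\<dots> \<in> homogeneous_exponents 1 + ideal_c_exponents i"
        using True \<open>1 \<le> p\<close> d
        by (intro set_plus_intro) (auto simp: homogeneous_exponents_def ideal_c_exponents_def)
      finally show ?thesis .
    next
      case False
      have "d = (0, 1) + (p, q - 1)"
        using False d by (simp add: plus_prod_def)
      also have "\<dots> \<in> homogeneous_exponents 1 + ideal_c_exponents i"
        using False d
        by (intro set_plus_intro) (auto simp: homogeneous_exponents_def ideal_c_exponents_def)
      finally show ?thesis .
    qed
  qed
qed

lemma ideal_monoid_mult: "x \<otimes>\<^bsub>ideal_monoid R\<^esub> y = ideal_prod R x y"
  by (simp add: ideal_monoid_def)

lemma ideal_monoid_pow_0: "x [^]\<^bsub>ideal_monoid R\<^esub> (0::nat) = carrier R"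
  by (simp add: nat_pow_def ideal_monoid_def)

lemma ideal_monoid_pow_Suc:
  "x [^]\<^bsub>ideal_monoid R\<^esub> (Suc n) = ideal_prod R (x [^]\<^bsub>ideal_monoid R\<^esub> n) x"
  by (simp add: nat_pow_def ideal_monoid_def)

context cring
begin

lemma monomial_closed: "x \<in> carrier R \<Longrightarrow> y \<in> carrier R \<Longrightarrow> monomial R x y d \<in> carrier R"
  by (simp add: monomial_def)

lemma monomial_add:
  "x \<in> carrier R \<Longrightarrow> y \<in> carrier R \<Longrightarrow>
    monomial R x y (d + e) = monomial R x y d \<otimes> monomial R x y e"
  by (simp add: monomial_def m_ac nat_pow_mult[symmetric])

lemma monomial_image_set_plus:
  assumes "x \<in> carrier R" "y \<in> carrier R"
  shows "monomial R x y ` (D + E) = (monomial R x y ` D) <#> (monomial R x y ` E)"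
proof
  show "monomial R x y ` (D + E) \<subseteq> (monomial R x y ` D) <#> (monomial R x y ` E)"
  proof
    fix z
    assume "z \<in> monomial R x y ` (D + E)"
    then obtain d e where "d \<in> D" "e \<in> E" "z = monomial R x y d \<otimes> monomial R x y e"
      using monomial_add[OF assms] by (blast elim: set_plus_elim)
    then show "z \<in> (monomial R x y ` D) <#> (monomial R x y ` E)"
      unfolding set_mult_def by blast
  qed
  show "(monomial R x y ` D) <#> (monomial R x y ` E) \<subseteq> monomial R x y ` (D + E)"
  proof
    fix z
    assume "z \<in> (monomial R x y ` D) <#> (monomial R x y ` E)"
    then obtain d e where "d \<in> D" "e \<in> E" "z = monomial R x y d \<otimes> monomial R x y e"
      unfolding set_mult_def by blast
    then show "z \<in> monomial R x y ` (D + E)"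
      unfolding monomial_add[OF assms, symmetric] by blast
  qed
qed

lemma monomial_ideal_mult:
  assumes "x \<in> carrier R" "y \<in> carrier R"
  shows "ideal_prod R (monomial_ideal R x y D) (monomial_ideal R x y E) =
    monomial_ideal R x y (D + E)"
  using assms by (simp add: monomial_ideal_def ideal_prod_genideals monomial_image_set_plus
      image_subset_iff monomial_closed)

lemma ideal_a1_eq_monomial_ideal:
  "x \<in> carrier R \<Longrightarrow> y \<in> carrier R \<Longrightarrow>
    ideal_a1 R x y = monomial_ideal R x y (homogeneous_exponents 1)"
  unfolding ideal_a1_def monomial_ideal_def homogeneous_exponents_1 by (simp add: monomial_def)

lemma ideal_b2_eq_monomial_ideal:
  "x \<in> carrier R \<Longrightarrow> y \<in> carrier R \<Longrightarrow>
    ideal_b2 R x y = monomial_ideal R x y {(2, 0), (0, 2)}"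
  by (simp add: ideal_b2_def monomial_ideal_def monomial_def)

lemma ideal_c_eq_monomial_ideal:
  "ideal_c R i x y = monomial_ideal R x y (ideal_c_exponents i)"
  unfolding ideal_c_def monomial_ideal_def
proof (intro arg_cong[where f = "genideal R"] equalityI subsetI)
  fix z
  assume "z \<in> {x [^] (2*i+1-t) \<otimes> y [^] t | t. t = 0 \<or> (odd t \<and> t \<le> 2*i+1)}"
  then obtain t where t: "t = 0 \<or> (odd t \<and> t \<le> 2*i+1)" "z = monomial R x y (2*i+1-t, t)"
    by (auto simp: monomial_def)
  have "(2*i+1-t, t) \<in> ideal_c_exponents i"
    using t(1) by (auto simp: ideal_c_exponents_def)
  then show "z \<in> monomial R x y ` ideal_c_exponents i"
    using t(2) by blast
next
  fix z
  assume "z \<in> monomial R x y ` ideal_c_exponents i"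
  then obtain p t where pt: "p + t = 2*i+1" "t = 0 \<or> odd t" "z = x [^] p \<otimes> y [^] t"
    by (auto simp: ideal_c_exponents_def monomial_def)
  then have "p = 2*i+1-t" "t = 0 \<or> (odd t \<and> t \<le> 2*i+1)"
    by auto
  then show "z \<in> {x [^] (2*i+1-t) \<otimes> y [^] t | t. t = 0 \<or> (odd t \<and> t \<le> 2*i+1)}"
    using pt(3) by blast
qed

lemma monomial_ideal_homogeneous_pow:
  assumes "x \<in> carrier R" "y \<in> carrier R"
  shows "monomial_ideal R x y (homogeneous_exponents 1) [^]\<^bsub>ideal_monoid R\<^esub> n =
    monomial_ideal R x y (homogeneous_exponents n)"
proof (induct n)
  case 0
  have "monomial_ideal R x y (homogeneous_exponents 0) = carrier R"
    using assms by (simp add: monomial_ideal_def homogeneous_exponents_0 monomial_def genideal_one)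
  then show ?case
    by (simp only: ideal_monoid_pow_0)
next
  case (Suc n)
  then show ?case
    by (simp only: ideal_monoid_pow_Suc monomial_ideal_mult[OF assms] homogeneous_exponents_add)
      simp
qed

lemma ideal_a1_mult_b2:
  assumes "x \<in> carrier R" "y \<in> carrier R"
  shows "ideal_a1 R x y \<otimes>\<^bsub>ideal_monoid R\<^esub> ideal_b2 R x y =
    ideal_a1 R x y [^]\<^bsub>ideal_monoid R\<^esub> (3::nat)"
  by (simp only: ideal_monoid_mult ideal_a1_eq_monomial_ideal[OF assms]
      ideal_b2_eq_monomial_ideal[OF assms] monomial_ideal_mult[OF assms]
      homogeneous_exponents_1_plus_squares monomial_ideal_homogeneous_pow[OF assms])

lemma ideal_a1_mult_c:
  assumes "x \<in> carrier R" "y \<in> carrier R"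
  shows "ideal_a1 R x y \<otimes>\<^bsub>ideal_monoid R\<^esub> ideal_c R i x y =
    ideal_a1 R x y [^]\<^bsub>ideal_monoid R\<^esub> (2 * i + 2)"
  by (simp only: ideal_monoid_mult ideal_a1_eq_monomial_ideal[OF assms] ideal_c_eq_monomial_ideal
      monomial_ideal_mult[OF assms] homogeneous_exponents_1_plus_ideal_c_exponents
      monomial_ideal_homogeneous_pow[OF assms])

end

section \<open>Factorizations in commutative monoids\<close>

context comm_monoid
begin

lemma lprod_Nil [simp]: "lprod G [] = \<one>"
  by (simp add: lprod_def)

lemma lprod_Cons [simp]: "lprod G (x # xs) = x \<otimes> lprod G xs"
  by (simp add: lprod_def)

lemma lprod_closed: "set xs \<subseteq> carrier G \<Longrightarrow> lprod G xs \<in> carrier G"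
  by (induct xs) auto

lemma lprod_append:
  "set xs \<subseteq> carrier G \<Longrightarrow> set ys \<subseteq> carrier G \<Longrightarrow> lprod G (xs @ ys) = lprod G xs \<otimes> lprod G ys"
  by (induct xs) (auto simp: m_assoc lprod_closed)

lemma lprod_replicate: "a \<in> carrier G \<Longrightarrow> lprod G (replicate n a) = a [^] n"
  by (induct n) (auto simp: m_comm)

lemma atom_closed: "atom G a \<Longrightarrow> a \<in> carrier G"
  by (simp add: atom_def)

lemma atom_not_unit: "atom G a \<Longrightarrow> a \<notin> Units G"
  by (simp add: atom_def)

lemma length_in_lengths_lprod:
  assumes "\<forall>x\<in>set xs. atom G x"
  shows "length xs \<in> lengths G (lprod G xs)"
proof -
  have "lprod G xs = \<one> \<otimes> lprod G xs"
    using assms by (simp add: lprod_closed atom_closed subsetI)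
  then show ?thesis
    using assms unfolding lengths_def by blast
qed

lemma unit_mult_not_unit:
  assumes "a \<in> carrier G" "a \<notin> Units G" "u \<in> Units G"
  shows "u \<otimes> a \<notin> Units G"
proof
  assume "u \<otimes> a \<in> Units G"
  then have "a \<otimes> u \<in> Units G"
    using assms m_comm[of u a] by auto
  then have "a \<in> Units G"
    using assms unit_factor[of a u] by auto
  then show False
    using assms by simp
qed

lemma unit_mult_lprod_atoms_not_unit:
  assumes atoms: "\<forall>x\<in>set xs. atom G x" and "xs \<noteq> []" and u: "u \<in> Units G"
  shows "u \<otimes> lprod G xs \<notin> Units G"
proof
  assume unit: "u \<otimes> lprod G xs \<in> Units G"
  obtain y ys where xs: "xs = y # ys"
    using \<open>xs \<noteq> []\<close> by (cases xs) auto
  have y: "atom G y" and ys: "set ys \<subseteq> carrier G"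
    using atoms xs by (auto simp: atom_closed)
  have [simp]: "y \<in> carrier G" "u \<in> carrier G" "lprod G ys \<in> carrier G"
    using y u ys by (auto simp: atom_closed lprod_closed)
  have "y \<otimes> (u \<otimes> lprod G ys) \<in> Units G"
    using unit xs by (simp add: m_lcomm)
  then have "y \<in> Units G"
    by (rule unit_factor) auto
  then show False
    using y by (simp add: atom_not_unit)
qed

lemma unit_mult_lprod_atoms_not_atom:
  assumes atoms: "\<forall>x\<in>set xs. atom G x" and "2 \<le> length xs" and u: "u \<in> Units G"
  shows "\<not> atom G (u \<otimes> lprod G xs)"
proof
  assume atom: "atom G (u \<otimes> lprod G xs)"
  obtain y ys where xs: "xs = y # ys" and "ys \<noteq> []"
    using \<open>2 \<le> length xs\<close> by (cases xs) (auto simp: Suc_le_eq)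
  have y: "atom G y" and ys: "set ys \<subseteq> carrier G"
    using atoms xs by (auto simp: atom_closed)
  have [simp]: "y \<in> carrier G" "u \<in> carrier G" "lprod G ys \<in> carrier G"
    using y u ys by (auto simp: atom_closed lprod_closed)
  have "u \<otimes> lprod G xs = (u \<otimes> y) \<otimes> lprod G ys"
    using xs by (simp add: m_assoc)
  then have "u \<otimes> y \<in> Units G \<or> lprod G ys \<in> Units G"
    using atom unfolding atom_def by simp
  moreover have "u \<otimes> y \<notin> Units G"
    using u y by (simp add: unit_mult_not_unit atom_not_unit)
  moreover have "\<one> \<otimes> lprod G ys \<notin> Units G"
    using atoms xs \<open>ys \<noteq> []\<close> by (intro unit_mult_lprod_atoms_not_unit) auto
  ultimately show False
    by simp
qed

lemma atom_unit_mult: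
  assumes a: "atom G a" and u: "u \<in> Units G"
  shows "atom G (u \<otimes> a)"
  unfolding atom_def
proof (intro conjI ballI impI)
  have [simp]: "a \<in> carrier G" "u \<in> carrier G" "inv u \<in> carrier G"
    using a u by (auto simp: atom_closed)
  show "u \<otimes> a \<in> carrier G"
    by simp
  show "u \<otimes> a \<notin> Units G"
    using a u by (simp add: unit_mult_not_unit atom_not_unit)
  fix b c
  assume [simp]: "b \<in> carrier G" "c \<in> carrier G" and bc: "u \<otimes> a = b \<otimes> c"
  have "a = inv u \<otimes> (u \<otimes> a)"
    using u by (simp add: m_assoc[symmetric])
  also have "\<dots> = (inv u \<otimes> b) \<otimes> c"
    by (simp add: bc m_assoc)
  finally have "inv u \<otimes> b \<in> Units G \<or> c \<in> Units G"
    using a unfolding atom_def by simp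
  moreover have "b = u \<otimes> (inv u \<otimes> b)"
    using u by (simp add: m_assoc[symmetric])
  ultimately show "b \<in> Units G \<or> c \<in> Units G"
    using Units_m_closed[OF u, of "inv u \<otimes> b"] by auto
qed

lemma lengths_ge_2:
  assumes k: "k \<in> lengths G z" "2 \<le> k" and m: "m \<in> lengths G z"
  shows "2 \<le> m"
proof (rule ccontr)
  from k obtain ys v where ys: "2 \<le> length ys" "\<forall>x\<in>set ys. atom G x" "v \<in> Units G"
    and z: "z = v \<otimes> lprod G ys"
    unfolding lengths_def by blast
  from m obtain xs u where xs: "length xs = m" "\<forall>x\<in>set xs. atom G x" "u \<in> Units G"
    and z': "z = u \<otimes> lprod G xs"
    unfolding lengths_def by blast
  have "ys \<noteq> []"
    using ys(1) by auto
  assume "\<not> 2 \<le> m"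
  then consider "xs = []" | e where "xs = [e]"
    using xs(1) by (cases xs rule: remdups_adj.cases) auto
  then show False
  proof cases
    case 1
    then have "z \<in> Units G"
      using z' xs(3) by simp
    then show False
      using unit_mult_lprod_atoms_not_unit[OF ys(2) \<open>ys \<noteq> []\<close> ys(3)] z by simp
  next
    case (2 e)
    then have "atom G z"
      using z' xs by (simp add: atom_unit_mult atom_closed)
    then show False
      using unit_mult_lprod_atoms_not_atom[OF ys(2,1,3)] z by simp
  qed
qed

lemma atom_associated_to_factor:
  assumes a: "atom G a" and xs: "set xs \<subseteq> carrier G" and "w \<in> Units G" "a = w \<otimes> lprod G xs"
  shows "\<exists>e\<in>set xs. \<exists>v\<in>Units G. a = e \<otimes> v"
  using assms(2-)
proof (induct xs arbitrary: w)
  case Nil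
  then have "a \<in> Units G"
    by auto
  then show ?case
    using a by (simp add: atom_not_unit)
next
  case (Cons y ys)
  have [simp]: "y \<in> carrier G" "w \<in> carrier G" and ys: "set ys \<subseteq> carrier G"
    using Cons.prems by auto
  have a1: "a = (w \<otimes> y) \<otimes> lprod G ys"
    using Cons.prems ys by (simp add: m_assoc lprod_closed)
  have a2: "a = y \<otimes> (w \<otimes> lprod G ys)"
    using Cons.prems ys by (simp add: m_lcomm lprod_closed)
  have "w \<otimes> y \<in> Units G \<or> lprod G ys \<in> Units G"
    using a a1 ys unfolding atom_def by (simp add: lprod_closed)
  then show ?case
  proof
    assume "w \<otimes> y \<in> Units G"
    then show ?case
      using Cons.hyps[OF ys _ a1] by auto
  next
    assume "lprod G ys \<in> Units G"
    then show ?case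
      using a2 Cons.prems by auto
  qed
qed

lemma unit_cancellative_mult_eq_unit:
  assumes "unit_cancellative G" "x \<in> carrier G" "p \<in> carrier G" "w \<in> Units G"
    and eq: "x \<otimes> p = x \<otimes> w"
  shows "p \<in> Units G"
proof -
  have [simp]: "w \<in> carrier G" "inv w \<in> carrier G"
    using assms(4) by auto
  have "x \<otimes> (p \<otimes> inv w) = (x \<otimes> w) \<otimes> inv w"
    using assms by (simp add: m_assoc[symmetric] eq)
  also have "\<dots> = x"
    using assms by (simp add: m_assoc)
  finally have "x \<otimes> (p \<otimes> inv w) = x" .
  then have "p \<otimes> inv w \<in> Units G"
    using assms unfolding unit_cancellative_def by simp
  then show ?thesis
    using assms unit_factor[of p "inv w"] by simp
qed

lemma pow_unit_imp_unit:
  assumes "a \<in> carrier G" "0 < n" "a [^] (n::nat) \<in> Units G"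
  shows "a \<in> Units G"
proof -
  obtain m where "n = Suc m"
    using assms(2) gr0_implies_Suc by blast
  then have "a \<otimes> a [^] m \<in> Units G"
    using assms by (simp add: m_comm)
  then show ?thesis
    using assms unit_factor[of a "a [^] m"] by simp
qed

end

section \<open>Atoms a, b, c_i with a b = a^3 and a c_i = a^(2i+2)\<close>

context comm_monoid
begin

lemma lengths_pow_same_parity:
  assumes a: "atom G a" and c: "\<And>i. atom G (c i)"
    and ac: "\<And>i::nat. a \<otimes> c i = a [^] (2 * i + 2)" and "2 \<le> m"
  shows "m \<in> lengths G (a [^] (m + 2 * i))"
proof -
  obtain n where m: "m = n + 2"
    using \<open>2 \<le> m\<close> le_Suc_ex by (metis add.commute)
  have [simp]: "a \<in> carrier G" "c i \<in> carrier G"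
    using a c by (auto simp: atom_closed)
  let ?xs = "replicate (Suc n) a @ [c i]"
  have "lprod G ?xs = a [^] Suc n \<otimes> c i"
    by (simp add: lprod_append lprod_replicate del: replicate.simps)
  also have "\<dots> = a [^] n \<otimes> (a \<otimes> c i)"
    by (simp add: m_assoc)
  also have "\<dots> = a [^] n \<otimes> a [^] (2 * i + 2)"
    by (simp only: ac)
  also have "\<dots> = a [^] (n + (2 * i + 2))"
    by (rule nat_pow_mult) simp
  also have "n + (2 * i + 2) = m + 2 * i"
    using m by simp
  finally have lprod_eq: "lprod G ?xs = a [^] (m + 2 * i)" .
  have "length ?xs = m"
    using m by simp
  moreover have "length ?xs \<in> lengths G (lprod G ?xs)"
    using a c by (intro length_in_lengths_lprod) auto
  ultimately show ?thesis
    unfolding lprod_eq by simp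
qed

lemma lengths_pow_opposite_parity:
  assumes a: "atom G a" and b: "atom G b" and c: "\<And>i. atom G (c i)"
    and ab: "a \<otimes> b = a [^] (3::nat)" and ac: "\<And>i::nat. a \<otimes> c i = a [^] (2 * i + 2)"
    and "3 \<le> m"
  shows "m \<in> lengths G (a [^] (m + 2 * i + 1))"
proof -
  obtain n where m: "m = n + 3"
    using \<open>3 \<le> m\<close> le_Suc_ex by (metis add.commute)
  have [simp]: "a \<in> carrier G" "b \<in> carrier G" "c i \<in> carrier G"
    using a b c by (auto simp: atom_closed)
  let ?xs = "replicate (Suc n) a @ [b, c i]"
  have "lprod G ?xs = a [^] Suc n \<otimes> (b \<otimes> c i)"
    by (simp add: lprod_append lprod_replicate del: replicate.simps)
  also have "\<dots> = a [^] n \<otimes> (a \<otimes> b) \<otimes> c i"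
    by (simp add: m_assoc)
  also have "\<dots> = a [^] n \<otimes> a [^] (3::nat) \<otimes> c i"
    by (simp only: ab)
  also have "\<dots> = a [^] (n + 3) \<otimes> c i"
    by (simp only: nat_pow_mult \<open>a \<in> carrier G\<close>)
  also have "n + 3 = Suc (n + 2)"
    by simp
  also have "a [^] Suc (n + 2) \<otimes> c i = a [^] (n + 2) \<otimes> (a \<otimes> c i)"
    by (simp add: m_assoc)
  also have "\<dots> = a [^] (n + 2) \<otimes> a [^] (2 * i + 2)"
    by (simp only: ac)
  also have "\<dots> = a [^] (n + 2 + (2 * i + 2))"
    by (rule nat_pow_mult) simp
  also have "n + 2 + (2 * i + 2) = m + 2 * i + 1"
    using m by simp
  finally have lprod_eq: "lprod G ?xs = a [^] (m + 2 * i + 1)" .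
  have "length ?xs = m"
    using m by simp
  moreover have "length ?xs \<in> lengths G (lprod G ?xs)"
    using a b c by (intro length_in_lengths_lprod) auto
  ultimately show ?thesis
    unfolding lprod_eq by simp
qed

lemma lengths_even_pow:
  assumes a: "atom G a" and b: "atom G b" and c: "\<And>i. atom G (c i)"
    and ab: "a \<otimes> b = a [^] (3::nat)" and ac: "\<And>i::nat. a \<otimes> c i = a [^] (2 * i + 2)"
    and "even N" "2 \<le> m" "m \<le> N"
  shows "m \<in> lengths G (a [^] N)"
proof -
  define i where "i = (N - m) div 2"
  show ?thesis
  proof (cases "even (N - m)")
    case True
    then have "N = m + 2 * i"
      using \<open>m \<le> N\<close> by (simp add: i_def)
    then show ?thesis
      using lengths_pow_same_parity[OF a c ac \<open>2 \<le> m\<close>] by simp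
  next
    case False
    then have "N = m + 2 * i + 1" "3 \<le> m"
      using \<open>even N\<close> \<open>2 \<le> m\<close> \<open>m \<le> N\<close> unfolding i_def by presburger+
    then show ?thesis
      using lengths_pow_opposite_parity[OF a b c ab ac] by simp
  qed
qed

lemma union_of_sets_of_lengths_eq:
  assumes a: "atom G a" and b: "atom G b" and c: "\<And>i. atom G (c i)"
    and ab: "a \<otimes> b = a [^] (3::nat)" and ac: "\<And>i::nat. a \<otimes> c i = a [^] (2 * i + 2)"
    and "2 \<le> k"
  shows "union_of_sets_of_lengths G k = {n. 2 \<le> n}"
proof
  show "union_of_sets_of_lengths G k \<subseteq> {n. 2 \<le> n}"
    unfolding union_of_sets_of_lengths_def system_of_lengths_def
    using lengths_ge_2 \<open>2 \<le> k\<close> by blast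
  show "{n. 2 \<le> n} \<subseteq> union_of_sets_of_lengths G k"
  proof
    fix n :: nat
    assume "n \<in> {n. 2 \<le> n}"
    then have "k \<in> lengths G (a [^] (2 * (k + n)))" "n \<in> lengths G (a [^] (2 * (k + n)))"
      using lengths_even_pow[OF a b c ab ac] \<open>2 \<le> k\<close> by auto
    moreover have "lengths G (a [^] (2 * (k + n))) \<in> system_of_lengths G"
      using a unfolding system_of_lengths_def by (auto simp: atom_closed)
    ultimately show "n \<in> union_of_sets_of_lengths G k"
      unfolding union_of_sets_of_lengths_def by blast
  qed
qed

lemma pow_cofactors_not_associated:
  assumes uc: "unit_cancellative G" and a: "atom G a"
    and ac: "\<And>i::nat. a \<otimes> c i = a [^] (2 * i + 2)" and cc: "\<And>i. c i \<in> carrier G"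
    and "w \<in> Units G" "c j = c i \<otimes> w"
  shows "i = j"
proof -
  have [simp]: "a \<in> carrier G"
    using a by (simp add: atom_closed)
  have no_gap: False if "i < j" "w \<in> Units G" "c j = c i \<otimes> w" for i j w
  proof -
    have [simp]: "w \<in> carrier G"
      using that by blast
    have "a [^] (2 * i + 2) \<otimes> a [^] (2 * (j - i)) = a [^] (2 * i + 2 + 2 * (j - i))"
      by (rule nat_pow_mult) simp
    also have "2 * i + 2 + 2 * (j - i) = 2 * j + 2"
      using \<open>i < j\<close> by simp
    also have "a [^] (2 * j + 2) = a \<otimes> c j"
      by (rule ac[symmetric])
    also have "\<dots> = a \<otimes> c i \<otimes> w"
      using that cc by (simp add: m_assoc)
    also have "\<dots> = a [^] (2 * i + 2) \<otimes> w"
      by (simp only: ac)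
    finally have "a [^] (2 * i + 2) \<otimes> a [^] (2 * (j - i)) = a [^] (2 * i + 2) \<otimes> w" .
    then have "a [^] (2 * (j - i)) \<in> Units G"
      by (rule unit_cancellative_mult_eq_unit[OF uc _ _ \<open>w \<in> Units G\<close>, rotated 2]) simp_all
    then have "a \<in> Units G"
      by (rule pow_unit_imp_unit[rotated 2]) (use \<open>i < j\<close> in simp_all)
    then show False
      using a by (simp add: atom_not_unit)
  qed
  have "c i = c j \<otimes> inv w"
    using assms(5,6) cc[of i] by (simp add: m_assoc Units_closed)
  then show ?thesis
    using no_gap[of i j w] no_gap[of j i "inv w"] assms(5,6) by (cases i j rule: linorder_cases) blast+
qed

lemma not_locally_finitely_generated:
  assumes uc: "unit_cancellative G" and a: "atom G a" and c: "\<And>i. atom G (c i)"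
    and ac: "\<And>i::nat. a \<otimes> c i = a [^] (2 * i + 2)"
  shows "\<not> locally_finitely_generated G"
proof
  assume "locally_finitely_generated G"
  have [simp]: "a \<in> carrier G" "\<And>i. c i \<in> carrier G"
    using a c by (auto simp: atom_closed)
  have "\<exists>E. finite E \<and> E \<subseteq> divisors_of_powers G a \<and>
      (\<forall>d\<in>divisors_of_powers G a. \<exists>u\<in>Units G. \<exists>xs. set xs \<subseteq> E \<and> d = u \<otimes> lprod G xs)"
    using \<open>locally_finitely_generated G\<close> \<open>a \<in> carrier G\<close>
    unfolding locally_finitely_generated_def by (rule bspec)
  then obtain E where "finite E" and E: "E \<subseteq> divisors_of_powers G a"
    and gen: "\<forall>d\<in>divisors_of_powers G a. \<exists>u\<in>Units G. \<exists>xs. set xs \<subseteq> E \<and> d = u \<otimes> lprod G xs"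
    by (elim exE conjE)
  have [simp]: "E \<subseteq> carrier G"
    using E by (auto simp: divisors_of_powers_def)
  have "\<forall>i. \<exists>e. e \<in> E \<and> (\<exists>v\<in>Units G. c i = e \<otimes> v)"
  proof
    fix i
    have "a [^] (2 * i + 2) = a \<otimes> c i"
      by (rule ac[symmetric])
    also have "\<dots> = c i \<otimes> a"
      by (rule m_comm) simp_all
    finally have "c i divides a [^] (2 * i + 2)"
      by (rule dividesI[rotated]) simp
    then have "c i \<in> divisors_of_powers G a"
      unfolding divisors_of_powers_def using \<open>c i \<in> carrier G\<close> by blast
    then obtain u xs where u: "u \<in> Units G" and xs: "set xs \<subseteq> E" and ci: "c i = u \<otimes> lprod G xs"
      using gen by (elim bspec[elim_format] bexE exE conjE)
    have "set xs \<subseteq> carrier G"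
      using xs \<open>E \<subseteq> carrier G\<close> by (rule order_trans)
    then obtain e v where "e \<in> set xs" "v \<in> Units G" "c i = e \<otimes> v"
      using atom_associated_to_factor[OF c[of i] _ u ci] by blast
    then show "\<exists>e. e \<in> E \<and> (\<exists>v\<in>Units G. c i = e \<otimes> v)"
      using xs by blast
  qed
  then obtain f where f: "\<And>i. f i \<in> E" "\<And>i. \<exists>v\<in>Units G. c i = f i \<otimes> v"
    using choice[of "\<lambda>i e. e \<in> E \<and> (\<exists>v\<in>Units G. c i = e \<otimes> v)"] by blast
  have "range f \<subseteq> E"
    using f(1) by blast
  then have "finite (range f)"
    using \<open>finite E\<close> by (rule finite_subset)
  then have "\<not> inj f"
    using finite_imageD[of f UNIV] infinite_UNIV_nat by blast
  then obtain i j where "i \<noteq> j" "f i = f j"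
    unfolding inj_on_def by blast
  obtain v where v: "v \<in> Units G" "c i = f i \<otimes> v"
    using f(2)[of i] by blast
  obtain v' where v': "v' \<in> Units G" "c j = f j \<otimes> v'"
    using f(2)[of j] by blast
  have [simp]: "f i \<in> carrier G" "v \<in> carrier G" "v' \<in> carrier G"
    using f(1) \<open>E \<subseteq> carrier G\<close> v v' by blast+
  have "c i \<otimes> (inv v \<otimes> v') = f i \<otimes> ((v \<otimes> inv v) \<otimes> v')"
    using v by (simp add: m_assoc del: Units_r_inv)
  also have "\<dots> = c j"
    using v v' \<open>f i = f j\<close> by simp
  finally have "c j = c i \<otimes> (inv v \<otimes> v')"
    by (rule sym)
  then have "i = j"
    by (rule pow_cofactors_not_associated[OF uc a ac, rotated 2]) (use v v' in simp_all)
  then show False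
    using \<open>i \<noteq> j\<close> by simp
qed

end

lemma no_transfer_hom_to_cancellative:
  fixes H :: "('a, 'c) monoid_scheme" and B :: "('b, 'd) monoid_scheme"
  assumes "comm_monoid H" "comm_monoid_cancel B"
    and a: "atom H a" and b: "atom H b" and ab: "a \<otimes>\<^bsub>H\<^esub> b = a [^]\<^bsub>H\<^esub> (3::nat)"
  shows "\<not> transfer_hom H B \<theta>"
proof
  interpret H: comm_monoid H by fact
  interpret B: comm_monoid_cancel B by fact
  assume th: "transfer_hom H B \<theta>"
  have hom: "monoid_hom H B \<theta>"
    using th by (simp add: transfer_hom_def)
  have units: "{h \<in> carrier H. \<theta> h \<in> Units B} = Units H"
    using th unfolding transfer_hom_def by (elim conjE)
  have split: "\<forall>u\<in>carrier H. \<forall>x\<in>carrier B. \<forall>y\<in>carrier B. \<theta> u = x \<otimes>\<^bsub>B\<^esub> y \<longrightarrow>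
      (\<exists>v\<in>carrier H. \<exists>w\<in>carrier H. u = v \<otimes>\<^bsub>H\<^esub> w \<and>
        (\<exists>e\<in>Units B. \<theta> v = x \<otimes>\<^bsub>B\<^esub> e) \<and> (\<exists>e\<in>Units B. \<theta> w = y \<otimes>\<^bsub>B\<^esub> e))"
    using th unfolding transfer_hom_def by (elim conjE)
  have [simp]: "a \<in> carrier H" "b \<in> carrier H"
    using a b by (auto simp: atom_def)
  have [simp]: "x \<in> carrier H \<Longrightarrow> \<theta> x \<in> carrier B"
    and \<theta>_mult: "x \<in> carrier H \<Longrightarrow> y \<in> carrier H \<Longrightarrow> \<theta> (x \<otimes>\<^bsub>H\<^esub> y) = \<theta> x \<otimes>\<^bsub>B\<^esub> \<theta> y" for x y
    using hom unfolding monoid_hom_def by auto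
  have "\<theta> a \<otimes>\<^bsub>B\<^esub> \<theta> b = \<theta> (a \<otimes>\<^bsub>H\<^esub> (a \<otimes>\<^bsub>H\<^esub> a))"
    using ab by (simp add: \<theta>_mult[symmetric] numeral_3_eq_3 H.m_assoc)
  also have "\<dots> = \<theta> a \<otimes>\<^bsub>B\<^esub> (\<theta> a \<otimes>\<^bsub>B\<^esub> \<theta> a)"
    by (simp add: \<theta>_mult)
  finally have "\<theta> b = \<theta> a \<otimes>\<^bsub>B\<^esub> \<theta> a"
    by (simp add: B.l_cancel)
  then have "\<exists>v\<in>carrier H. \<exists>w\<in>carrier H. b = v \<otimes>\<^bsub>H\<^esub> w \<and>
      (\<exists>e\<in>Units B. \<theta> v = \<theta> a \<otimes>\<^bsub>B\<^esub> e) \<and> (\<exists>e\<in>Units B. \<theta> w = \<theta> a \<otimes>\<^bsub>B\<^esub> e)"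
    using split by simp
  then obtain v w where "v \<in> carrier H" "w \<in> carrier H" "b = v \<otimes>\<^bsub>H\<^esub> w"
    and v: "\<exists>e\<in>Units B. \<theta> v = \<theta> a \<otimes>\<^bsub>B\<^esub> e" and w: "\<exists>e\<in>Units B. \<theta> w = \<theta> a \<otimes>\<^bsub>B\<^esub> e"
    by blast
  have unit_iff: "h \<in> carrier H \<Longrightarrow> \<theta> h \<in> Units B \<longleftrightarrow> h \<in> Units H" for h
    using units by blast
  have "v \<in> Units H \<or> w \<in> Units H"
    using b \<open>v \<in> carrier H\<close> \<open>w \<in> carrier H\<close> \<open>b = v \<otimes>\<^bsub>H\<^esub> w\<close> unfolding atom_def by blast
  then have "\<theta> v \<in> Units B \<or> \<theta> w \<in> Units B"
    using unit_iff \<open>v \<in> carrier H\<close> \<open>w \<in> carrier H\<close> by blast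
  then obtain e where "e \<in> Units B" "\<theta> a \<otimes>\<^bsub>B\<^esub> e \<in> Units B"
    using v w by (elim disjE bexE) auto
  then have "\<theta> a \<in> Units B"
    using B.unit_factor[of "\<theta> a" e] B.Units_closed by simp
  then have "a \<in> Units H"
    using unit_iff by simp
  then show False
    using a by (simp add: atom_def)
qed

theorem lemma5p3:
  fixes R :: "('a, 'r) ring_scheme" and X1 X2 :: 'a
  assumes "domain R"
    and "BF_monoid (ideal_monoid R)"
    and "X1 \<in> carrier R - {\<zero>\<^bsub>R\<^esub>}" and "X2 \<in> carrier R - {\<zero>\<^bsub>R\<^esub>}" and "X1 \<noteq> X2"
    and "atom (ideal_monoid R) (ideal_a1 R X1 X2)"
    and "atom (ideal_monoid R) (ideal_b2 R X1 X2)"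
    and "\<forall>i::nat. atom (ideal_monoid R) (ideal_c R i X1 X2)"
  shows "\<not> transfer_Krull (ideal_monoid R) TYPE(('b, 'd) monoid_scheme)
    \<and> \<not> locally_finitely_generated (ideal_monoid R)
    \<and> (\<forall>k::nat. k \<ge> 2 \<longrightarrow> union_of_sets_of_lengths (ideal_monoid R) k = {n. n \<ge> 2})"
proof -
  interpret domain R by fact
  have X: "X1 \<in> carrier R" "X2 \<in> carrier R"
    using assms(3,4) by auto
  have H: "comm_monoid (ideal_monoid R)" and uc: "unit_cancellative (ideal_monoid R)"
    using assms(2) unfolding BF_monoid_def by auto
  note a = assms(6) and b = assms(7) and c = spec[OF assms(8)]
  note ab = ideal_a1_mult_b2[OF X] and ac = ideal_a1_mult_c[OF X]
  have "\<not> transfer_Krull (ideal_monoid R) TYPE(('b, 'd) monoid_scheme)"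
  proof
    assume "transfer_Krull (ideal_monoid R) TYPE(('b, 'd) monoid_scheme)"
    then obtain B :: "('b, 'd) monoid_scheme" and \<theta>
      where "comm_monoid_cancel B" "transfer_hom (ideal_monoid R) B \<theta>"
      unfolding transfer_Krull_def Krull_monoid_def by blast
    then show False
      using no_transfer_hom_to_cancellative[OF H _ a b ab] by blast
  qed
  moreover have "\<not> locally_finitely_generated (ideal_monoid R)"
    by (rule comm_monoid.not_locally_finitely_generated[OF H uc a c ac])
  moreover have "union_of_sets_of_lengths (ideal_monoid R) k = {n. n \<ge> 2}" if "k \<ge> 2" for k
    by (rule comm_monoid.union_of_sets_of_lengths_eq[OF H a b c ab ac that])
  ultimately show ?thesis
    by blast
qed

end
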